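(* Let $N\ge 3$ be even, $K>0$ and $0<P\le 2K$. Consider the equations for phase differences $\theta_1,\dots,\theta_N$ of a ring network with homogeneous power distribution $P_i=(-1)^{i+1}P$: \[ \sin\theta_i-\sin\theta_{i+1}=\frac{P_i}{K}\quad (i=1,\dots,N,\ \theta_{N+1}=\theta_1),\qquad \sum_{i=1}^N\theta_i=2m\pi\ \text{ for some } m\in\{-\lfloor N/2\rfloor,\dots,\lfloor N/2\rfloor\}. \] The total number of stable equilibria, i.e. solutions with all $\theta_i\in[-\pi/2,\pi/2]$, is \[ N_s=1+2\Big\lfloor \frac{N}{2\pi}\arccos\Big(\sqrt{\frac{P}{2K}}\Big)\Big\rfloor . \]
   Context: These equations describe the equilibria $(\boldsymbol\delta,\mathbf 0)$ of the ring swing-equation system $\ddot\delta_i+\alpha\dot\delta_i+K[\sin(\delta_i-\delta_{i+1})+\sin(\delta_i-\delta_{i-1})]=P_i$ (indices mod $N$) in terms of the phase differences $\theta_1=\delta_1-\delta_N$, $\theta_i=\delta_i-\delta_{i-1}$ (mod $2\pi$). $\lfloor x\rfloor$ denotes the largest integer not exceeding $x$. *)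

theory Defs
  imports Complex_Main
begin

text \<open>Phase differences theta_1..theta_N are represented as a real list of length N,
  theta_i = th ! (i-1). Power injections P_i = (-1)^(i+1) P.\<close>

definition ring_equilibrium :: "nat \<Rightarrow> real \<Rightarrow> real \<Rightarrow> real list \<Rightarrow> bool" where
  "ring_equilibrium N K P th \<longleftrightarrow>
     length th = N \<and>
     (\<forall>i\<in>{1..N}. sin (th ! (i - 1)) - sin (th ! (i mod N))
                    = ((-1) ^ (i + 1) * P) / K) \<and>
     (\<exists>m::int. - \<lfloor>real N / 2\<rfloor> \<le> m \<and> m \<le> \<lfloor>real N / 2\<rfloor> \<and>
               sum_list th = 2 * real_of_int m * pi)"

definition stable_equilibria :: "nat \<Rightarrow> real \<Rightarrow> real \<Rightarrow> real list set" where
  "stable_equilibria N K P =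
     {th. ring_equilibrium N K P th \<and> (\<forall>x\<in>set th. - (pi / 2) \<le> x \<and> x \<le> pi / 2)}"

end

theory Submission imports Defs begin

text \<open>Since \<open>N\<close> is even and all angles lie in \<open>[-\<pi>/2, \<pi>/2]\<close>, where \<open>sin\<close> is injective,
  the alternating equations force \<open>\<theta>\<close> to alternate between two angles \<open>a, b\<close> with
  \<open>sin a - sin b = P/K\<close>. Writing \<open>a = u + v\<close>, \<open>b = u - v\<close> turns this into
  \<open>2 cos u sin v = P/K\<close>, and the winding condition into \<open>u = 2m\<pi>/N\<close>. For each such \<open>u\<close>
  a (unique) admissible \<open>v\<close> exists exactly when \<open>cos u \<ge> sqrt (P/(2K))\<close>, i.e. when
  \<open>|m| \<le> N/(2\<pi>) \<cdot> arccos (sqrt (P/(2K)))\<close>; distinct \<open>m\<close> give distinct equilibria.\<close>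

lemma sin_add_minus_sin_diff: "sin (u + v) - sin (u - v) = 2 * cos u * sin (v::real)"
  by (simp add: sin_add sin_diff)

lemma le_cos_iff_abs_le_arccos:
  fixes u y :: real
  assumes "\<bar>u\<bar> \<le> pi" and "0 \<le> y" "y \<le> 1"
  shows "y \<le> cos u \<longleftrightarrow> \<bar>u\<bar> \<le> arccos y"
proof -
  have "y \<le> cos u \<longleftrightarrow> cos (arccos y) \<le> cos \<bar>u\<bar>" using assms by (simp add: cos_arccos)
  also have "\<dots> \<longleftrightarrow> \<bar>u\<bar> \<le> arccos y"
    using assms arccos_bounded[of y] by (intro cos_mono_le_eq) auto
  finally show ?thesis .
qed

lemma sin_diff_eq_imp_half_angles:
  fixes a b p :: real
  assumes "p > 0" and "\<bar>a\<bar> \<le> pi/2" "\<bar>b\<bar> \<le> pi/2" and "sin a - sin b = p"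
  shows "sqrt (p/2) \<le> cos ((a + b)/2)" and "(a - b)/2 = arcsin (p / (2 * cos ((a + b)/2)))"
proof -
  define u where "u = (a + b)/2"
  define v where "v = (a - b)/2"
  have uv: "\<bar>u\<bar> + \<bar>v\<bar> \<le> pi/2" using assms(2,3) by (auto simp: u_def v_def abs_if field_simps)
  have p: "p = 2 * cos u * sin v"
    using assms(4) sin_add_minus_sin_diff[of u v]
    by (simp add: u_def v_def add_divide_distrib[symmetric] diff_divide_distrib[symmetric])
  have "cos u \<ge> 0" using uv by (intro cos_ge_zero) auto
  with p \<open>p > 0\<close> have cu: "cos u > 0" by (cases "cos u = 0") auto
  have "v = arcsin (sin v)" using uv by (intro arcsin_sin[symmetric]) auto
  also have "sin v = p / (2 * cos u)" using p cu by simp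
  finally show "(a - b)/2 = arcsin (p / (2 * cos ((a + b)/2)))" by (simp add: u_def v_def)
  have "sin v \<le> sin (pi/2 - \<bar>u\<bar>)" using uv by (intro sin_monotone_2pi_le) auto
  also have "\<dots> = cos u" by (simp add: sin_cos_eq cos_abs_real)
  finally have "p/2 \<le> (cos u)\<^sup>2" using p cu by (simp add: power2_eq_square mult_left_mono)
  then have "sqrt (p/2) \<le> sqrt ((cos u)\<^sup>2)" by (rule real_sqrt_le_mono)
  then show "sqrt (p/2) \<le> cos ((a + b)/2)" using cu by (simp add: u_def)
qed

lemma half_angles_imp_sin_diff_eq:
  fixes u p :: real
  assumes "p > 0" and "\<bar>u\<bar> \<le> pi/2" and "sqrt (p/2) \<le> cos u"
  defines "v \<equiv> arcsin (p / (2 * cos u))"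
  shows "\<bar>u + v\<bar> \<le> pi/2" and "\<bar>u - v\<bar> \<le> pi/2" and "sin (u + v) - sin (u - v) = p"
proof -
  have cu: "cos u > 0" using assms by (meson less_le_trans real_sqrt_gt_zero half_gt_zero)
  have "p/2 \<le> (cos u)\<^sup>2" using assms(3) by (rule sqrt_le_D)
  then have q_le: "p / (2 * cos u) \<le> cos u" using cu by (simp add: field_simps power2_eq_square)
  have q_pos: "0 < p / (2 * cos u)" using cu \<open>p > 0\<close> by simp
  have q_le1: "p / (2 * cos u) \<le> 1" using q_le cos_le_one[of u] by linarith
  have sv: "sin v = p / (2 * cos u)" unfolding v_def using q_pos q_le1 by (intro sin_arcsin) auto
  have "0 \<le> v" unfolding v_def using q_pos q_le1 arcsin_le_arcsin[of 0 "p / (2 * cos u)"] by simp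
  moreover have "v \<le> pi/2 - \<bar>u\<bar>" unfolding v_def
  proof (subst arcsin_le_iff)
    show "p / (2 * cos u) \<le> sin (pi/2 - \<bar>u\<bar>)" using q_le by (simp add: sin_cos_eq cos_abs_real)
  qed (use q_pos q_le1 assms(2) pi_gt_zero in linarith)+
  ultimately show "\<bar>u + v\<bar> \<le> pi/2" and "\<bar>u - v\<bar> \<le> pi/2"
    using abs_triangle_ineq[of u v] abs_triangle_ineq4[of u v] by auto
  show "sin (u + v) - sin (u - v) = p" using sin_add_minus_sin_diff[of u v] sv cu by simp
qed

definition alternating :: "nat \<Rightarrow> 'a \<Rightarrow> 'a \<Rightarrow> 'a list" where
  "alternating N a b = map (\<lambda>k. if even k then a else b) [0..<N]"

lemma length_alternating [simp]: "length (alternating N a b) = N"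
  by (simp add: alternating_def)

lemma nth_alternating [simp]: "k < N \<Longrightarrow> alternating N a b ! k = (if even k then a else b)"
  by (simp add: alternating_def)

lemma set_alternating_subset: "set (alternating N a b) \<subseteq> {a, b}"
  by (auto simp: alternating_def)

lemma sum_list_alternating:
  assumes "even N"
  shows "sum_list (alternating N a b) = real N / 2 * (a + b)"
proof -
  obtain n where "N = 2 * n" using assms by blast
  moreover have "sum_list (alternating (2 * n) a b) = real n * (a + b)"
    by (induction n) (auto simp: alternating_def algebra_simps)
  ultimately show ?thesis by simp
qed

lemma sin_inj_on_half_pi:
  fixes x y :: real
  assumes "\<bar>x\<bar> \<le> pi/2" "\<bar>y\<bar> \<le> pi/2" and "sin x = sin y"
  shows "x = y"
proof -
  have "x = arcsin (sin x)" using assms(1) by (intro arcsin_sin[symmetric]) auto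
  also have "\<dots> = y" unfolding \<open>sin x = sin y\<close> using assms(2) by (intro arcsin_sin) auto
  finally show ?thesis .
qed

lemma ring_equilibrium_sin_alternating:
  assumes eq: "ring_equilibrium N K P th" and "N \<ge> 2" and "k < N"
  shows "sin (th ! k) = (if even k then sin (th ! 0) else sin (th ! 1))"
proof -
  have eqs: "\<And>i. i \<in> {1..N} \<Longrightarrow>
               sin (th ! (i - 1)) - sin (th ! (i mod N)) = ((-1) ^ (i + 1) * P) / K"
    using eq unfolding ring_equilibrium_def by blast
  have first: "sin (th ! 0) - sin (th ! 1) = P / K" using eqs[of 1] assms(2) by simp
  show ?thesis using assms(3)
  proof (induction k)
    case 0
    then show ?case by simp
  next
    case (Suc k)
    have "Suc k \<in> {1..N}" and "Suc k mod N = Suc k" using Suc.prems by auto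
    then have "sin (th ! k) - sin (th ! Suc k) = ((-1) ^ (Suc k + 1) * P) / K"
      using eqs[of "Suc k"] by simp
    then show ?case using Suc.IH Suc.prems first by (cases "even k") auto
  qed
qed

lemma stable_equilibrium_alternating:
  assumes "th \<in> stable_equilibria N K P" and "N \<ge> 2"
  shows "th = alternating N (th ! 0) (th ! 1)"
proof (rule nth_equalityI)
  have eq: "ring_equilibrium N K P th" and range: "\<forall>x\<in>set th. \<bar>x\<bar> \<le> pi/2"
    using assms(1) by (auto simp: stable_equilibria_def abs_le_iff)
  then show len: "length th = length (alternating N (th ! 0) (th ! 1))"
    by (simp add: ring_equilibrium_def)
  have bound: "\<bar>th ! k\<bar> \<le> pi/2" if "k < N" for k
    using range nth_mem[of k th] that len by auto
  fix k assume "k < length th"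
  then have k: "k < N" using len by simp
  have "th ! k = (if even k then th ! 0 else th ! 1)"
    using ring_equilibrium_sin_alternating[OF eq assms(2) k] bound[OF k] bound[of 0] bound[of 1] assms(2)
    by (simp add: sin_inj_on_half_pi)
  then show "th ! k = alternating N (th ! 0) (th ! 1) ! k" using k by simp
qed

lemma alternating_mem_stable_equilibria_iff:
  assumes "even N" and "N \<ge> 2"
  shows "alternating N a b \<in> stable_equilibria N K P \<longleftrightarrow>
           \<bar>a\<bar> \<le> pi/2 \<and> \<bar>b\<bar> \<le> pi/2 \<and> sin a - sin b = P / K \<and>
           (\<exists>m::int. \<bar>m\<bar> \<le> \<lfloor>real N / 2\<rfloor> \<and> real N / 2 * (a + b) = 2 * real_of_int m * pi)"
proof -
  have diff: "sin (alternating N a b ! (i - 1)) - sin (alternating N a b ! (i mod N))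
                = (-1) ^ (i + 1) * (sin a - sin b)" if "1 \<le> i" "i \<le> N" for i
  proof -
    have "even (i mod N) = even i" using assms(1) by (simp add: dvd_mod_iff)
    moreover have "i mod N < N" using that by simp
    ultimately show ?thesis using that by (cases "even i") auto
  qed
  have eqs: "(\<forall>i\<in>{1..N}. sin (alternating N a b ! (i - 1)) - sin (alternating N a b ! (i mod N))
                = ((-1) ^ (i + 1) * P) / K) \<longleftrightarrow> sin a - sin b = P / K"
  proof
    assume all: "\<forall>i\<in>{1..N}. sin (alternating N a b ! (i - 1)) - sin (alternating N a b ! (i mod N))
                   = ((-1) ^ (i + 1) * P) / K"
    have "1 \<in> {1..N}" using assms(2) by simp
    from bspec[OF all this] show "sin a - sin b = P / K" using diff[of 1] assms(2) by simp
  next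
    assume ab: "sin a - sin b = P / K"
    show "\<forall>i\<in>{1..N}. sin (alternating N a b ! (i - 1)) - sin (alternating N a b ! (i mod N))
            = ((-1) ^ (i + 1) * P) / K"
    proof
      fix i assume "i \<in> {1..N}"
      then have "sin (alternating N a b ! (i - 1)) - sin (alternating N a b ! (i mod N))
                   = (-1) ^ (i + 1) * (sin a - sin b)" by (intro diff) auto
      then show "sin (alternating N a b ! (i - 1)) - sin (alternating N a b ! (i mod N))
                   = ((-1) ^ (i + 1) * P) / K" by (simp only: ab times_divide_eq_right)
    qed
  qed
  have set: "set (alternating N a b) = {a, b}"
    using assms(2) set_alternating_subset[of N a b] nth_mem[of 0 "alternating N a b"]
      nth_mem[of 1 "alternating N a b"] by auto
  show ?thesis
    unfolding stable_equilibria_def mem_Collect_eq ring_equilibrium_def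
    by (simp only: eqs set sum_list_alternating[OF assms(1)]) (auto simp: abs_le_iff)
qed

definition ring_solution :: "nat \<Rightarrow> real \<Rightarrow> int \<Rightarrow> real list" where
  "ring_solution N p m =
     (let u = 2 * real_of_int m * pi / real N; v = arcsin (p / (2 * cos u))
      in alternating N (u + v) (u - v))"

lemma inj_ring_solution:
  assumes "N \<ge> 2"
  shows "inj (ring_solution N p)"
proof
  fix m m' assume "ring_solution N p m = ring_solution N p m'"
  then have "ring_solution N p m ! 0 + ring_solution N p m ! 1
               = ring_solution N p m' ! 0 + ring_solution N p m' ! 1" by simp
  then show "m = m'" using assms by (simp add: ring_solution_def Let_def)
qed

lemma stable_equilibrium_imp_ring_solution:
  assumes th: "th \<in> stable_equilibria N K P"
    and "even N" and "N \<ge> 2" and "K > 0" and "0 < P" and "P \<le> 2 * K"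
  obtains m where "\<bar>2 * real_of_int m * pi / real N\<bar> \<le> arccos (sqrt (P / (2 * K)))"
    and "th = ring_solution N (P / K) m"
proof -
  define p where "p = P / K"
  have "p > 0" and "p \<le> 2" using assms(4-6) by (auto simp: p_def field_simps)
  then have y: "0 \<le> sqrt (p / 2)" "sqrt (p / 2) \<le> 1" by auto
  define a b where "a = th ! 0" and "b = th ! 1"
  have alt: "th = alternating N a b"
    unfolding a_def b_def using stable_equilibrium_alternating[OF th assms(3)] .
  with th obtain m where ab: "\<bar>a\<bar> \<le> pi/2" "\<bar>b\<bar> \<le> pi/2" "sin a - sin b = p"
    and sum: "real N / 2 * (a + b) = 2 * real_of_int m * pi"
    using alternating_mem_stable_equilibria_iff[OF assms(2,3)] p_def by metis
  define u where "u = (a + b) / 2"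
  have u: "u = 2 * real_of_int m * pi / real N" using sum assms(3) by (simp add: u_def field_simps)
  have "\<bar>u\<bar> \<le> pi/2" using ab(1,2) by (auto simp: u_def abs_if field_simps split: if_splits)
  moreover have "sqrt (p / 2) \<le> cos u"
    using sin_diff_eq_imp_half_angles(1)[OF \<open>p > 0\<close> ab] by (simp add: u_def)
  ultimately have "\<bar>u\<bar> \<le> arccos (sqrt (p / 2))"
    using le_cos_iff_abs_le_arccos[OF _ y, of u] pi_gt_zero by simp
  then have m_bound: "\<bar>2 * real_of_int m * pi / real N\<bar> \<le> arccos (sqrt (P / (2 * K)))"
    by (simp add: u p_def mult.commute)
  have "(a - b) / 2 = arcsin (p / (2 * cos u))"
    using sin_diff_eq_imp_half_angles(2)[OF \<open>p > 0\<close> ab] by (simp add: u_def)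
  then have "a = u + arcsin (p / (2 * cos u))" and "b = u - arcsin (p / (2 * cos u))"
    by (simp_all add: u_def field_simps)
  then have "th = ring_solution N (P / K) m" using alt by (simp add: ring_solution_def Let_def u p_def)
  with m_bound show thesis by (rule that)
qed

lemma ring_solution_mem_stable_equilibria:
  assumes "even N" and "N \<ge> 2" and "K > 0" and "0 < P" and "P \<le> 2 * K"
    and m: "\<bar>2 * real_of_int m * pi / real N\<bar> \<le> arccos (sqrt (P / (2 * K)))"
  shows "ring_solution N (P / K) m \<in> stable_equilibria N K P"
proof -
  define p where "p = P / K"
  have "p > 0" and "p \<le> 2" using assms(3-5) by (auto simp: p_def field_simps)
  then have y: "0 \<le> sqrt (p / 2)" "sqrt (p / 2) \<le> 1" by auto
  define u where "u = 2 * real_of_int m * pi / real N"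
  define v where "v = arcsin (p / (2 * cos u))"
  have u_le: "\<bar>u\<bar> \<le> arccos (sqrt (p / 2))" using m by (simp add: u_def p_def mult.commute)
  then have "\<bar>u\<bar> \<le> pi/2" using arccos_le_pi2[OF y] by linarith
  moreover have "sqrt (p / 2) \<le> cos u"
    using le_cos_iff_abs_le_arccos[OF _ y] u_le \<open>\<bar>u\<bar> \<le> pi/2\<close> by simp
  ultimately have uv: "\<bar>u + v\<bar> \<le> pi/2" "\<bar>u - v\<bar> \<le> pi/2"
    "sin (u + v) - sin (u - v) = P / K"
    using half_angles_imp_sin_diff_eq[OF \<open>p > 0\<close>] unfolding v_def p_def by blast+
  have "\<bar>real_of_int m\<bar> \<le> real N / 4"
    using \<open>\<bar>u\<bar> \<le> pi/2\<close> assms(2) by (simp add: u_def abs_mult field_simps)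
  then have m_le: "\<bar>m\<bar> \<le> \<lfloor>real N / 2\<rfloor>" by (simp add: le_floor_iff)
  have sum: "real N / 2 * ((u + v) + (u - v)) = 2 * real_of_int m * pi"
    using assms(2) by (simp add: u_def)
  have "alternating N (u + v) (u - v) \<in> stable_equilibria N K P"
    unfolding alternating_mem_stable_equilibria_iff[OF assms(1,2)]
    by (intro conjI exI[of _ m] uv m_le sum)
  then show ?thesis by (simp add: ring_solution_def Let_def u_def v_def p_def)
qed

lemma stable_equilibria_eq_image_ring_solution:
  assumes "even N" and "N \<ge> 2" and "K > 0" and "0 < P" and "P \<le> 2 * K"
  shows "stable_equilibria N K P = ring_solution N (P / K) `
           {m. \<bar>2 * real_of_int m * pi / real N\<bar> \<le> arccos (sqrt (P / (2 * K)))}"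
  using stable_equilibrium_imp_ring_solution[OF _ assms] ring_solution_mem_stable_equilibria[OF assms]
  by blast

lemma int_abs_le_eq_atLeastAtMost_floor:
  "{m::int. \<bar>real_of_int m\<bar> \<le> c} = {-\<lfloor>c\<rfloor>..\<lfloor>c\<rfloor>}"
proof -
  have "\<bar>real_of_int m\<bar> \<le> c \<longleftrightarrow> \<bar>m\<bar> \<le> \<lfloor>c\<rfloor>" for m
    by (simp only: le_floor_iff of_int_abs)
  then have "{m::int. \<bar>real_of_int m\<bar> \<le> c} = {m. \<bar>m\<bar> \<le> \<lfloor>c\<rfloor>}" by blast
  also have "\<dots> = {-\<lfloor>c\<rfloor>..\<lfloor>c\<rfloor>}" by (auto simp: abs_le_iff)
  finally show ?thesis .
qed

theorem proposition1:
  fixes N :: nat and K P :: real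
  assumes "N \<ge> 3" and "even N" and "K > 0" and "0 < P" and "P \<le> 2 * K"
  shows "finite (stable_equilibria N K P) \<and>
         int (card (stable_equilibria N K P))
           = 1 + 2 * \<lfloor>real N / (2 * pi) * arccos (sqrt (P / (2 * K)))\<rfloor>"
proof -
  define c where "c = real N / (2 * pi) * arccos (sqrt (P / (2 * K)))"
  have "0 \<le> sqrt (P / (2 * K))" and "sqrt (P / (2 * K)) \<le> 1" using assms by simp_all
  then have "0 \<le> arccos (sqrt (P / (2 * K)))" by (intro arccos_lbound) linarith+
  then have "c \<ge> 0" by (simp add: c_def)
  have "{m. \<bar>2 * real_of_int m * pi / real N\<bar> \<le> arccos (sqrt (P / (2 * K)))}
          = {m::int. \<bar>real_of_int m\<bar> \<le> c}"
    using assms(1) by (simp add: c_def abs_mult field_simps)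
  then have S: "stable_equilibria N K P = ring_solution N (P / K) ` {-\<lfloor>c\<rfloor>..\<lfloor>c\<rfloor>}"
    using stable_equilibria_eq_image_ring_solution[of N K P] assms
    by (simp add: int_abs_le_eq_atLeastAtMost_floor)
  have "inj (ring_solution N (P / K))" using assms(1) by (simp add: inj_ring_solution)
  then have "card (stable_equilibria N K P) = card {-\<lfloor>c\<rfloor>..\<lfloor>c\<rfloor>}"
    unfolding S by (rule card_image[OF inj_on_subset[OF _ subset_UNIV]])
  then show ?thesis using S \<open>c \<ge> 0\<close> by (simp add: c_def)
qed

end
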